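(* For every real $\varepsilon>0$ there exist a positive integer $j$ and a vector $\mathbf{y}\in\mathbb{R}^j$ with $\mathbf{y}\ge \mathbf{0}$ (componentwise) such that $M_{j,\varepsilon}^T\mathbf{y}\ge \mathbf{0}$ and $\mathbf{b}'^T_{j,\varepsilon}\mathbf{y}<0$.
   Context: For a positive integer $j$ and real $\varepsilon$, $M_{j,\varepsilon}$ is the $j\times j$ lower triangular matrix with entries $m_{a,b}=1$ if $a=b$, $m_{a,b}=-(3-\varepsilon)$ if $a=b+1$, $m_{a,b}=1$ if $a\ge b+2$, and $m_{a,b}=0$ if $a<b$. The vector $\mathbf{b}'_{j,\varepsilon}\in\mathbb{R}^j$ has coordinates $b'_1=7-2\varepsilon$ and $b'_i=12-i-3\varepsilon$ for $2\le i\le j$ (equivalently, $\mathbf{b}'_{j,\varepsilon}=(8-2\varepsilon)\mathbf{1}-M_{j,\varepsilon}\mathbf{1}$, where $\mathbf{1}$ is the all-ones vector). *)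

theory Defs
  imports Complex_Main
begin

text \<open>Entries of the j x j lower triangular matrix M_{j,eps}, 1-based indices a, b in {1..j}
  (the entries do not depend on j).\<close>
definition M_entry :: "real \<Rightarrow> nat \<Rightarrow> nat \<Rightarrow> real" where
  "M_entry eps a b =
     (if a = b then 1
      else if a = b + 1 then - (3 - eps)
      else if a \<ge> b + 2 then 1
      else 0)"

definition b_prime :: "real \<Rightarrow> nat \<Rightarrow> real" where
  "b_prime eps i = (if i = 1 then 7 - 2 * eps else 12 - real i - 3 * eps)"

end

theory Submission
  imports Defs
begin

text \<open>The certificate \<open>y\<close> is read backwards as the increments of a nondecreasing sequence \<open>u\<close>
  with \<open>u 0 = 0\<close>. Then column \<open>b\<close> of \<open>M\<^sup>T y\<close> becomes the second order expression
  \<open>u (k + 2) - (4 - \<epsilon>) u (k + 1) + (4 - \<epsilon>) u k\<close> with \<open>k = j - 1 - b\<close>. For \<open>\<epsilon> = 0\<close> its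
  characteristic polynomial \<open>(x - 2)\<^sup>2\<close> has a double root, so sequences like \<open>k 2\<^sup>k\<close> almost
  satisfy it; the slack \<open>\<epsilon>\<close> pays for a concave damping factor \<open>N + 1 - k\<close>, after which \<open>u\<close> can be
  frozen at its value for \<open>k \<ge> N\<close>. Freezing makes the first twelve entries of \<open>y\<close> vanish, exactly
  where \<open>b'\<close> may be positive, while \<open>y j = u 1 > 0\<close> meets a negative entry of \<open>b'\<close>.\<close>

definition rev_increments :: "(nat \<Rightarrow> real) \<Rightarrow> nat \<Rightarrow> nat \<Rightarrow> real" where
  "rev_increments u j i = u (j + 1 - i) - u (j - i)"

lemma sum_rev_increments_from:
  assumes "u 0 = 0" and "b \<le> j + 1"
  shows "sum (rev_increments u j) {b..j} = u (j + 1 - b)"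
  using assms(2)
proof (induction "j + 1 - b" arbitrary: b)
  case 0
  then show ?case using assms(1) by simp
next
  case (Suc n)
  then have "b \<le> j" by simp
  then have "sum (rev_increments u j) {b..j} =
      rev_increments u j b + sum (rev_increments u j) {Suc b..j}"
    by (rule sum.atLeast_Suc_atMost)
  also have "sum (rev_increments u j) {Suc b..j} = u (j - b)"
    using Suc by simp
  finally show ?case by (simp add: rev_increments_def)
qed

lemma M_column_sum_last:
  assumes "1 \<le> j"
  shows "(\<Sum>a=1..j. M_entry eps a j * y a) = y j"
proof -
  have "(\<Sum>a=1..j. M_entry eps a j * y a) = (\<Sum>a\<in>{j}. M_entry eps a j * y a)"
    using assms by (intro sum.mono_neutral_right) (auto simp: M_entry_def)
  then show ?thesis by (simp add: M_entry_def)
qed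

lemma M_column_sum:
  assumes "1 \<le> b" and "b < j"
  shows "(\<Sum>a=1..j. M_entry eps a b * y a) =
           y b - (3 - eps) * y (Suc b) + sum y {Suc (Suc b)..j}"
proof -
  have "(\<Sum>a=1..j. M_entry eps a b * y a) = (\<Sum>a=b..j. M_entry eps a b * y a)"
    using assms by (intro sum.mono_neutral_right) (auto simp: M_entry_def)
  also have "\<dots> = y b + (\<Sum>a=Suc b..j. M_entry eps a b * y a)"
    using assms by (subst sum.atLeast_Suc_atMost) (auto simp: M_entry_def)
  also have "(\<Sum>a=Suc b..j. M_entry eps a b * y a) =
      - (3 - eps) * y (Suc b) + (\<Sum>a=Suc (Suc b)..j. M_entry eps a b * y a)"
    using assms by (subst sum.atLeast_Suc_atMost) (auto simp: M_entry_def)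
  also have "(\<Sum>a=Suc (Suc b)..j. M_entry eps a b * y a) = sum y {Suc (Suc b)..j}"
    by (rule sum.cong) (auto simp: M_entry_def)
  finally show ?thesis by (simp add: algebra_simps)
qed

lemma M_column_sum_rev_increments:
  assumes "u 0 = 0" and "1 \<le> b" and "b + k + 1 = j"
  shows "(\<Sum>a=1..j. M_entry eps a b * rev_increments u j a) =
           u (k + 2) - (4 - eps) * u (k + 1) + (4 - eps) * u k"
proof -
  have idx: "j + 1 - b = k + 2" "j - b = k + 1" "j + 1 - Suc b = k + 1" "j - Suc b = k"
    using assms(3) by auto
  have "sum (rev_increments u j) {Suc (Suc b)..j} = u k"
    using sum_rev_increments_from[of u "Suc (Suc b)" j] assms idx by simp
  moreover have "(\<Sum>a=1..j. M_entry eps a b * rev_increments u j a) =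
      rev_increments u j b - (3 - eps) * rev_increments u j (Suc b)
      + sum (rev_increments u j) {Suc (Suc b)..j}"
    using assms by (intro M_column_sum) auto
  ultimately show ?thesis
    using idx by (simp add: rev_increments_def algebra_simps)
qed

lemma b_prime_sum_neg:
  assumes "eps > 0" and "12 \<le> j"
    and "\<And>i. i \<in> {1..j} \<Longrightarrow> y i \<ge> 0" and "\<And>i. i < 12 \<Longrightarrow> y i = 0" and "y j > 0"
  shows "(\<Sum>i=1..j. b_prime eps i * y i) < 0"
proof -
  obtain n where j: "j = Suc n" using assms(2) by (cases j) auto
  have "b_prime eps i * y i \<le> 0" if "i \<in> {1..n}" for i
  proof (cases "i < 12")
    case False
    then have "b_prime eps i < 0" using assms(1) by (auto simp: b_prime_def)
    then show ?thesis using assms(3)[of i] that j by (simp add: mult_nonpos_nonneg)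
  qed (use assms(4) in simp)
  then have "(\<Sum>i=1..n. b_prime eps i * y i) \<le> 0" by (rule sum_nonpos)
  moreover have "b_prime eps j < 0" using assms(1,2) by (auto simp: b_prime_def)
  then have "b_prime eps j * y j < 0" using assms(5) by (simp add: mult_neg_pos)
  ultimately show ?thesis by (simp add: j)
qed

definition damped_seq :: "nat \<Rightarrow> nat \<Rightarrow> real" where
  "damped_seq N k =
     (if k \<le> N then 2 ^ k * real k * (real N + 1 - real k) else 2 ^ N * real N)"

lemma damped_seq_0: "damped_seq N 0 = 0"
  by (simp add: damped_seq_def)

lemma damped_seq_const: "N \<le> k \<Longrightarrow> damped_seq N k = 2 ^ N * real N"
  by (auto simp: damped_seq_def)

lemma damped_seq_Suc_ge: "damped_seq N k \<le> damped_seq N (Suc k)"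
proof (cases "Suc k \<le> N")
  case True
  then have k: "real k \<le> real N - 1" by linarith
  have "real k * (real N - real k - 3) \<ge> real k * (-2)"
    by (rule mult_left_mono) (use k in auto)
  then have "real k * (real N + 1 - real k) \<le> 2 * ((real k + 1) * (real N - real k))"
    using k by (simp add: algebra_simps)
  then have "2 ^ k * (real k * (real N + 1 - real k)) \<le>
      2 ^ k * (2 * ((real k + 1) * (real N - real k)))"
    by (rule mult_left_mono) simp
  then show ?thesis using True by (simp add: damped_seq_def algebra_simps)
next
  case False
  then show ?thesis by (simp add: damped_seq_const)
qed

lemma damped_seq_recurrence_nonneg:
  assumes "eps > 0" and "4 \<le> N" and "8 \<le> eps * real N"
  shows "damped_seq N (k + 2) - (4 - eps) * damped_seq N (k + 1) + (4 - eps) * damped_seq N k \<ge> 0"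
proof -
  consider "k + 2 \<le> N" | "k + 1 = N" | "N \<le> k" by linarith
  then show ?thesis
  proof cases
    case 1
    define q where "q = real N * real k - real k * real k + 2 * real N - 3 * real k"
    have k: "real k \<le> real N - 2" using 1 by linarith
    have "real k * (real N - real k - 3) \<ge> real k * (-1)"
      by (rule mult_left_mono) (use k in auto)
    then have "q \<ge> real N" using k by (simp add: q_def algebra_simps)
    then have "eps * q - 8 \<ge> 0"
      using assms(1,3) mult_left_mono[of "real N" q eps] by linarith
    moreover have "damped_seq N (k + 2) - (4 - eps) * damped_seq N (k + 1)
        + (4 - eps) * damped_seq N k = 2 ^ k * (eps * q - 8)"
      using 1 by (simp add: damped_seq_def q_def algebra_simps)
    ultimately show ?thesis by simp
  next
    case 2
    have "damped_seq N (k + 2) - (4 - eps) * damped_seq N (k + 1)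
        + (4 - eps) * damped_seq N k = 2 ^ (k + 1) * (real N - (4 - eps))"
      using 2 by (auto simp: damped_seq_def algebra_simps)
    then show ?thesis using assms(1,2) by simp
  next
    case 3
    then show ?thesis by (simp add: damped_seq_const)
  qed
qed

theorem mainTheorem6:
  fixes eps :: real
  assumes "eps > 0"
  shows "\<exists>(j::nat) (y::nat \<Rightarrow> real). j \<ge> 1 \<and>
           (\<forall>i\<in>{1..j}. y i \<ge> 0) \<and>
           (\<forall>b\<in>{1..j}. (\<Sum>a=1..j. M_entry eps a b * y a) \<ge> 0) \<and>
           (\<Sum>i=1..j. b_prime eps i * y i) < 0"
proof -
  define N :: nat where "N = nat \<lceil>8 / eps\<rceil> + 4"
  define j where "j = N + 12"
  define y where "y = rev_increments (damped_seq N) j"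
  have "real N \<ge> 8 / eps" by (simp add: N_def) linarith
  then have N: "4 \<le> N" "8 \<le> eps * real N"
    using assms by (auto simp: N_def field_simps)
  have y_nonneg: "y i \<ge> 0" if "i \<le> j" for i
    using damped_seq_Suc_ge[of N "j - i"] that by (simp add: y_def rev_increments_def Suc_diff_le)
  have "(\<Sum>a=1..j. M_entry eps a b * y a) \<ge> 0" if "b \<in> {1..j}" for b
  proof (cases "b = j")
    case True
    then show ?thesis using that y_nonneg[of j] M_column_sum_last[of j eps y] by simp
  next
    case False
    then have "b + (j - 1 - b) + 1 = j" using that by auto
    then show ?thesis
      using that damped_seq_recurrence_nonneg[OF assms N, of "j - 1 - b"]
        M_column_sum_rev_increments[of "damped_seq N" b "j - 1 - b" j eps] damped_seq_0
      by (simp add: y_def)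
  qed
  moreover have "(\<Sum>i=1..j. b_prime eps i * y i) < 0"
  proof (rule b_prime_sum_neg[OF assms])
    show "y i = 0" if "i < 12" for i
      using that by (simp add: y_def j_def rev_increments_def damped_seq_const)
    show "y j > 0" using N by (simp add: y_def rev_increments_def damped_seq_def)
  qed (use y_nonneg in \<open>auto simp: j_def\<close>)
  ultimately show ?thesis using y_nonneg by (intro exI[of _ j] exI[of _ y]) (auto simp: j_def)
qed

end
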